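(* Let $t_1,c_1>0$ and let $f:[0,t_1]\to\mathbb R^2$ be continuous with $f(0)=0$. Suppose $(g_1,M_1)$ and $(g_2,M_2)$ are two solutions of the deterministic Skorokhod problem $g_i(t)=g_i(0)+f(t)+RM_i(t)$, $t\in[0,t_1]$, with $g_1(0),g_2(0)\ne0$, $|g_1(0)-g_2(0)|\le c_1/4$, and $\sup_{s\le t_*\wedge t_1}|g_1(s)-g_2(s)|\ge c_1$, where $t_*=\inf\{t>0:g_2(t)=0\}$. Then $$t_*\ge\inf\{y:\operatorname{Osc}(f,t_1,y)\ge c_1/(4\chi_1)\}.$$
   Context: $a_1>0>a_2$ with $|a_1a_2|>1$ (standing assumptions), $R=\begin{pmatrix}1&-a_1\\-a_2&1\end{pmatrix}$, $D$ the closed first quadrant, $\Gamma_d$ the nonnegative $x$-axis, $\Gamma_u$ the nonnegative $y$-axis. A solution $(g,M)$ of the deterministic Skorokhod problem with initial point $x_0\in D$ and driving function $f$ consists of continuous $g:[0,t_1]\to D$ and $M=(M^1,M^2)$ with continuous non-decreasing components, $M(0)=0$, $M^1$ increasing only when $g\in\Gamma_d$, $M^2$ increasing only when $g\in\Gamma_u$, with $g(t)=x_0+f(t)+RM(t)$. $\operatorname{Osc}(f,t_1,y)=\sup_{0\le s_1\le s_2\le s_1+y\le t_1}|f(s_2)-f(s_1)|$. $\chi_1$ is a constant depending only on $a_1,a_2$ such that for all such $t_0$, $f$ (with $f(0)=0$), $x_0$ and every solution $(g,M)$ on $[0,t_0]$, $\sup_{u_1,u_2\in[s,t]}(|g(u_2)-g(u_1)|+|M(u_2)-M(u_1)|)\le\chi_1\sup_{u_1,u_2\in[s,t]}|f(u_2)-f(u_1)|$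 for all $0\le s\le t\le t_0$ (such a constant exists since $R$ is completely-$S$). *)

theory Defs
  imports "HOL-Analysis.Analysis"
begin

text \<open>Points of the plane are pairs of reals; the norm on real \<times> real is Euclidean.\<close>

definition Rmat :: "real \<Rightarrow> real \<Rightarrow> real \<times> real \<Rightarrow> real \<times> real" where
  "Rmat a1 a2 m = (fst m - a1 * snd m, - a2 * fst m + snd m)"

definition quadD :: "(real \<times> real) set" where
  "quadD = {p. fst p \<ge> 0 \<and> snd p \<ge> 0}"

definition Gamma_d :: "(real \<times> real) set" where
  "Gamma_d = {p. fst p \<ge> 0 \<and> snd p = 0}"

definition Gamma_u :: "(real \<times> real) set" where
  "Gamma_u = {p. fst p = 0 \<and> snd p \<ge> 0}"

text \<open>(g, M) solves the deterministic Skorokhod problem on [0,t1] with initial point x0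
  and driving function f. "M^i increases only when g is on the face" is expressed as:
  on any subinterval where g avoids the face, M^i is constant.\<close>
definition skorokhod_sol ::
  "real \<Rightarrow> real \<Rightarrow> real \<Rightarrow> real \<times> real \<Rightarrow> (real \<Rightarrow> real \<times> real)
     \<Rightarrow> (real \<Rightarrow> real \<times> real) \<Rightarrow> (real \<Rightarrow> real \<times> real) \<Rightarrow> bool" where
  "skorokhod_sol a1 a2 t1 x0 f g M \<longleftrightarrow>
     x0 \<in> quadD \<and>
     continuous_on {0..t1} g \<and> (\<forall>t\<in>{0..t1}. g t \<in> quadD) \<and>
     continuous_on {0..t1} M \<and>
     mono_on {0..t1} (\<lambda>t. fst (M t)) \<and> mono_on {0..t1} (\<lambda>t. snd (M t)) \<and>
     M 0 = (0, 0) \<and>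
     (\<forall>s t. 0 \<le> s \<and> s \<le> t \<and> t \<le> t1 \<and> (\<forall>u\<in>{s..t}. g u \<notin> Gamma_d)
        \<longrightarrow> fst (M s) = fst (M t)) \<and>
     (\<forall>s t. 0 \<le> s \<and> s \<le> t \<and> t \<le> t1 \<and> (\<forall>u\<in>{s..t}. g u \<notin> Gamma_u)
        \<longrightarrow> snd (M s) = snd (M t)) \<and>
     (\<forall>t\<in>{0..t1}. g t = x0 + f t + Rmat a1 a2 (M t))"

definition Osc :: "(real \<Rightarrow> real \<times> real) \<Rightarrow> real \<Rightarrow> real \<Rightarrow> real" where
  "Osc f t1 y = (SUP p \<in> {(s1, s2). 0 \<le> s1 \<and> s1 \<le> s2 \<and> s2 \<le> s1 + y \<and> s1 + y \<le> t1}.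
                    norm (f (snd p) - f (fst p)))"

definition chi_const :: "real \<Rightarrow> real \<Rightarrow> real \<Rightarrow> bool" where
  "chi_const a1 a2 chi \<longleftrightarrow>
     (\<forall>t0 f x0 g M. continuous_on {0..t0} f \<and> f 0 = 0 \<and> x0 \<in> quadD \<and>
        skorokhod_sol a1 a2 t0 x0 f g M \<longrightarrow>
        (\<forall>s t. 0 \<le> s \<and> s \<le> t \<and> t \<le> t0 \<longrightarrow>
           (SUP p \<in> {s..t} \<times> {s..t}. norm (g (snd p) - g (fst p)) + norm (M (snd p) - M (fst p)))
             \<le> chi * (SUP p \<in> {s..t} \<times> {s..t}. norm (f (snd p) - f (fst p)))))"

end

theory Submission
  imports Defs
begin

text \<open>Suppose the first zero \<open>t\<^sub>*\<close> of \<open>g\<^sub>2\<close> came before every window length \<open>y\<close> on which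
  \<open>f\<close> oscillates by \<open>c\<^sub>1/(4\<chi>\<^sub>1)\<close>. Then every increment of \<open>f\<close> on \<open>[0, t\<^sub>*]\<close> is at most
  \<open>c\<^sub>1/(4\<chi>\<^sub>1)\<close>, so by the Lipschitz property of the Skorokhod map both \<open>g\<^sub>1\<close> and \<open>g\<^sub>2\<close> move
  by at most \<open>c\<^sub>1/4\<close> on \<open>[0, t\<^sub>*]\<close>. As they start within \<open>c\<^sub>1/4\<close> of each other, they stay
  within \<open>3c\<^sub>1/4 < c\<^sub>1\<close> up to time \<open>t\<^sub>*\<close>, contradicting the hypothesis.\<close>

lemma continuous_on_increment:
  fixes h :: "real \<Rightarrow> 'a::real_normed_vector"
  assumes "continuous_on {a..b} h"
  shows "continuous_on ({a..b} \<times> {a..b}) (\<lambda>p. h (snd p) - h (fst p))"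
proof -
  have "continuous_on ({a..b} \<times> {a..b}) (\<lambda>p. h (snd p))"
    by (rule continuous_on_compose2[OF assms continuous_on_snd]) auto
  moreover have "continuous_on ({a..b} \<times> {a..b}) (\<lambda>p. h (fst p))"
    by (rule continuous_on_compose2[OF assms continuous_on_fst]) auto
  ultimately show ?thesis
    by (rule continuous_on_diff)
qed

lemma bdd_above_continuous_image:
  fixes \<phi> :: "'a::topological_space \<Rightarrow> real"
  assumes "compact S" "continuous_on S \<phi>"
  shows "bdd_above (\<phi> ` S)"
  using assms by (intro bounded_imp_bdd_above compact_imp_bounded compact_continuous_image)

lemma Inf_ereal_image_Icc:
  assumes "Z \<subseteq> {a..b}" "Z \<noteq> {}"
  shows "Inf (ereal ` Z) = ereal (Inf Z)" "Inf Z \<in> {a..b}"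
proof -
  have "bdd_below Z"
    using assms(1) by (intro bdd_belowI[of _ a]) auto
  then show "Inf (ereal ` Z) = ereal (Inf Z)"
    using ereal_Inf'[of Z] assms(2) by simp
  obtain z where "z \<in> Z"
    using assms(2) by blast
  have "a \<le> Inf Z"
    using assms by (intro cInf_greatest) auto
  moreover have "Inf Z \<le> b"
    using cInf_lower[OF \<open>z \<in> Z\<close> \<open>bdd_below Z\<close>] \<open>z \<in> Z\<close> assms(1) by auto
  ultimately show "Inf Z \<in> {a..b}"
    by simp
qed

lemma norm_increment_le_Osc:
  assumes "continuous_on {0..t1} f" "0 \<le> u1" "u1 \<le> u2" "u2 \<le> t1"
  shows "norm (f u2 - f u1) \<le> Osc f t1 (u2 - u1)"
proof -
  let ?S = "{(s1, s2). 0 \<le> s1 \<and> s1 \<le> s2 \<and> s2 \<le> s1 + (u2 - u1) \<and> s1 + (u2 - u1) \<le> t1}"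
  have "bdd_above ((\<lambda>p. norm (f (snd p) - f (fst p))) ` ({0..t1} \<times> {0..t1}))"
    by (intro bdd_above_continuous_image compact_Times compact_Icc continuous_on_norm
        continuous_on_increment assms(1))
  moreover have "?S \<subseteq> {0..t1} \<times> {0..t1}"
    by auto
  ultimately have "bdd_above ((\<lambda>p. norm (f (snd p) - f (fst p))) ` ?S)"
    by (meson bdd_above_mono image_mono)
  moreover have "(u1, u2) \<in> ?S"
    using assms by auto
  ultimately show ?thesis
    unfolding Osc_def by (metis (no_types, lifting) cSUP_upper fst_conv snd_conv)
qed

lemma Osc_less_before_Inf:
  assumes "ereal T < Inf (ereal ` {y. 0 \<le> y \<and> y \<le> t1 \<and> Osc f t1 y \<ge> \<epsilon>})"
    and "T \<le> t1" "0 \<le> y" "y \<le> T"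
  shows "Osc f t1 y < \<epsilon>"
proof (rule ccontr)
  assume "\<not> ?thesis"
  then have "Inf (ereal ` {y. 0 \<le> y \<and> y \<le> t1 \<and> Osc f t1 y \<ge> \<epsilon>}) \<le> ereal y"
    using assms(2-4) by (intro Inf_lower) auto
  then show False
    using assms(1,4) by (meson ereal_less_eq(3) leD order_trans)
qed

lemma SUP_increments_le_if_Osc_less:
  assumes "continuous_on {0..t1} f" "0 \<le> T" "T \<le> t1"
    and small: "\<And>y. 0 \<le> y \<Longrightarrow> y \<le> T \<Longrightarrow> Osc f t1 y < \<epsilon>"
  shows "(SUP p \<in> {0..T} \<times> {0..T}. norm (f (snd p) - f (fst p))) \<le> \<epsilon>"
proof (rule cSUP_least)
  show "{0..T} \<times> {0..T} \<noteq> {}"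
    using assms(2) by auto
next
  have ordered: "norm (f v - f u) \<le> \<epsilon>" if "0 \<le> u" "u \<le> v" "v \<le> T" for u v
    using norm_increment_le_Osc[OF assms(1), of u v] small[of "v - u"] that assms(3) by simp
  fix p :: "real \<times> real"
  assume "p \<in> {0..T} \<times> {0..T}"
  then show "norm (f (snd p) - f (fst p)) \<le> \<epsilon>"
    using ordered[of "fst p" "snd p"] ordered[of "snd p" "fst p"]
    by (cases "fst p \<le> snd p") (auto simp: norm_minus_commute)
qed

lemma skorokhod_sol_restrict:
  assumes "skorokhod_sol a1 a2 t1 x f g M" "0 \<le> T" "T \<le> t1"
  shows "skorokhod_sol a1 a2 T x f g M"
proof -
  have sub: "{0..T} \<subseteq> {0..t1}"
    using assms(3) by auto
  show ?thesis
    using assms(1) continuous_on_subset[OF _ sub] mono_on_subset[OF _ sub] sub assms(3)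
    unfolding skorokhod_sol_def by (meson atLeastAtMost_iff order_trans)
qed

lemma skorokhod_increment_le:
  assumes "chi_const a1 a2 chi" "continuous_on {0..t1} f" "f 0 = 0"
    and sol: "skorokhod_sol a1 a2 t1 x f g M"
    and "0 \<le> T" "T \<le> t1" "s \<in> {0..T}" "t \<in> {0..T}"
  shows "norm (g t - g s) \<le> chi * (SUP p \<in> {0..T} \<times> {0..T}. norm (f (snd p) - f (fst p)))"
proof -
  have solT: "skorokhod_sol a1 a2 T x f g M"
    using skorokhod_sol_restrict[OF sol assms(5,6)] .
  then have "continuous_on {0..T} g" "continuous_on {0..T} M" "x \<in> quadD"
    unfolding skorokhod_sol_def by blast+
  then have "bdd_above ((\<lambda>p. norm (g (snd p) - g (fst p)) + norm (M (snd p) - M (fst p)))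
      ` ({0..T} \<times> {0..T}))"
    by (intro bdd_above_continuous_image compact_Times compact_Icc continuous_on_add
        continuous_on_norm continuous_on_increment)
  moreover have "(s, t) \<in> {0..T} \<times> {0..T}"
    using assms(7,8) by simp
  ultimately have "norm (g t - g s) + norm (M t - M s)
      \<le> (SUP p \<in> {0..T} \<times> {0..T}. norm (g (snd p) - g (fst p)) + norm (M (snd p) - M (fst p)))"
    by (metis (no_types, lifting) cSUP_upper fst_conv snd_conv)
  also have "\<dots> \<le> chi * (SUP p \<in> {0..T} \<times> {0..T}. norm (f (snd p) - f (fst p)))"
    using assms(1)[unfolded chi_const_def, rule_format, of T f x g M 0 T]
      continuous_on_subset[OF assms(2)] assms(3,5,6) \<open>x \<in> quadD\<close> solT
    by simp
  finally show ?thesis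
    using norm_ge_zero[of "M t - M s"] by linarith
qed

lemma skorokhod_increment_le_if_Osc_less:
  assumes "chi_const a1 a2 chi" "chi > 0" "continuous_on {0..t1} f" "f 0 = 0"
    and sol: "skorokhod_sol a1 a2 t1 x f g M"
    and T: "0 \<le> T" "T \<le> t1"
    and small: "\<And>y. 0 \<le> y \<Longrightarrow> y \<le> T \<Longrightarrow> Osc f t1 y < \<epsilon> / chi"
    and "s \<in> {0..T}" "t \<in> {0..T}"
  shows "norm (g t - g s) \<le> \<epsilon>"
proof -
  have "norm (g t - g s) \<le> chi * (SUP p \<in> {0..T} \<times> {0..T}. norm (f (snd p) - f (fst p)))"
    using skorokhod_increment_le[OF assms(1,3,4) sol T assms(9,10)] .
  also have "\<dots> \<le> chi * (\<epsilon> / chi)"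
    using SUP_increments_le_if_Osc_less[OF assms(3) T small] assms(2) by (intro mult_left_mono) auto
  also have "\<dots> = \<epsilon>"
    using assms(2) by simp
  finally show ?thesis .
qed

theorem lemma9p4:
  fixes a1 a2 chi1 t1 c1 :: real
    and f g1 g2 M1 M2 :: "real \<Rightarrow> real \<times> real"
    and x1 x2 :: "real \<times> real"
  assumes "a1 > 0" and "a2 < 0" and "\<bar>a1 * a2\<bar> > 1"
    and "chi1 > 0" and "chi_const a1 a2 chi1"
    and "t1 > 0" and "c1 > 0"
    and "continuous_on {0..t1} f" and "f 0 = 0"
    and "skorokhod_sol a1 a2 t1 x1 f g1 M1"
    and "skorokhod_sol a1 a2 t1 x2 f g2 M2"
    and "g1 0 \<noteq> 0" and "g2 0 \<noteq> 0"
    and "norm (g1 0 - g2 0) \<le> c1 / 4"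
    and "tstar = Inf (ereal ` {t. 0 < t \<and> t \<le> t1 \<and> g2 t = 0})"
    and "(SUP s \<in> {s. 0 \<le> s \<and> ereal s \<le> min tstar (ereal t1)}. norm (g1 s - g2 s)) \<ge> c1"
  shows "tstar \<ge> Inf (ereal ` {y. 0 \<le> y \<and> y \<le> t1 \<and> Osc f t1 y \<ge> c1 / (4 * chi1)})"
proof (cases "{t. 0 < t \<and> t \<le> t1 \<and> g2 t = 0} = {}")
  case True
  then show ?thesis
    unfolding assms(15) True by (simp add: top_ereal_def)
next
  case False
  define T where "T = Inf {t. 0 < t \<and> t \<le> t1 \<and> g2 t = 0}"
  have "{t. 0 < t \<and> t \<le> t1 \<and> g2 t = 0} \<subseteq> {0..t1}"
    by auto
  then have tstar: "tstar = ereal T" and T: "0 \<le> T" "T \<le> t1"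
    using Inf_ereal_image_Icc False assms(15) unfolding T_def by auto
  show ?thesis
  proof (rule ccontr)
    assume "\<not> ?thesis"
    then have small: "Osc f t1 y < (c1 / 4) / chi1" if "0 \<le> y" "y \<le> T" for y
      using Osc_less_before_Inf[where T = T and f = f] that T(2) tstar by simp
    have moves: "norm (g s - g 0) \<le> c1 / 4"
      if "skorokhod_sol a1 a2 t1 x f g M" "s \<in> {0..T}" for x g M s
      using skorokhod_increment_le_if_Osc_less[OF assms(5,4,8,9) that(1) T small] that(2) T(1)
      by simp
    have "norm (g1 s - g2 s) \<le> 3 * c1 / 4" if "s \<in> {0..T}" for s
      using norm_diff_triangle_le[OF norm_diff_triangle_le[OF moves[OF assms(10) that] assms(14)]
          moves[OF assms(11) that, unfolded norm_minus_commute[of "g2 s"]]]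
      by simp
    then have "(SUP s \<in> {0..T}. norm (g1 s - g2 s)) \<le> 3 * c1 / 4"
      using T by (intro cSUP_least) auto
    moreover have "{s. 0 \<le> s \<and> ereal s \<le> min tstar (ereal t1)} = {0..T}"
      using tstar T by (auto simp: min_def)
    ultimately show False
      using assms(7,16) by simp
  qed
qed

end
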